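(* For every integer $n>0$ there exists an open bounded convex set $P\subset\mathbb R^n$ such that $$\sup_\phi\frac{\int_P|\phi|\,d\mu}{-\mu(P)\inf_P\phi}=2,$$ where the supremum is over all convex functions $\phi:P\to\mathbb R$ with $\phi\in L^1(P)$, $\int_P\phi\,d\mu=0$ and $\phi\not\equiv0$.
   Context: $\mu$ denotes Lebesgue measure on $\mathbb R^n$. *)

theory Defs
  imports "HOL-Analysis.Analysis"
begin

end

theory Submission
  imports Defs "HOL-Analysis.Analysis"
begin

(* Upper bound: if the mean of phi vanishes and I = inf phi < 0, then |phi| <= phi - 2 I pointwise,
   so the L1 norm of phi is at most -2 mu(P) I.  A convex function on a bounded open set is
   bounded below, so I is a genuine infimum.
   Lower bound on the unit cube: phi = psi - m, where psi(x) = max 0 (x_k - c) has mean m, attains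
   its infimum -m on the whole slab {x_k < c} of measure c.  As the mean of phi is zero, its
   negative part carries half of its L1 norm, which is therefore at least 2 m c; the ratio is at
   least 2 c, and c -> 1. *)

lemma convex_on_bdd_below:
  fixes f :: "'a::euclidean_space \<Rightarrow> real"
  assumes "open S" "bounded S" "convex_on S f"
  shows "bdd_below (f ` S)"
proof (cases "S = {}")
  case False
  then obtain a where "a \<in> S" by blast
  then obtain r where "r > 0" and ball: "cball a r \<subseteq> S"
    using \<open>open S\<close> open_contains_cball by blast
  have "continuous_on (cball a r) f"
    using convex_on_continuous[OF \<open>open S\<close> \<open>convex_on S f\<close>] ball continuous_on_subset by blast
  then obtain B where B: "\<And>y. y \<in> cball a r \<Longrightarrow> f y \<le> B"
    using continuous_attains_sup[OF compact_cball] by (metis empty_iff)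
  obtain e where e: "\<And>x. x \<in> S \<Longrightarrow> dist a x \<le> e"
    using \<open>bounded S\<close> bounded_any_center by metis
  define D where "D = e + 1"
  have "D > 0"
    using e[OF \<open>a \<in> S\<close>] by (simp add: D_def)
  have D: "dist a x \<le> D" if "x \<in> S" for x
    using e[OF that] by (simp add: D_def)
  define s where "s = r / D"
  have "s > 0" using \<open>r > 0\<close> \<open>D > 0\<close> by (simp add: s_def)
  have "((1 + s) * f a - B) / s \<le> f x" if "x \<in> S" for x
  proof -
    \<comment> \<open>Reflect \<open>x\<close> through \<open>a\<close> into the ball, where \<open>f \<le> B\<close>; convexity on the segment then bounds \<open>f x\<close> from below.\<close>
    define y where "y = a + s *\<^sub>R (a - x)"
    have "dist a y = s * dist a x" using \<open>s > 0\<close> by (simp add: y_def dist_norm)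
    also have "\<dots> \<le> r" using D[OF that] \<open>s > 0\<close> \<open>D > 0\<close> by (simp add: s_def field_simps)
    finally have "y \<in> cball a r" by simp
    define t where "t = 1 / (1 + s)"
    have t: "1 - t = s * t" "t + s * t = 1"
      using \<open>s > 0\<close> by (simp_all add: t_def field_simps)
    then have "(1 - t) *\<^sub>R x + t *\<^sub>R y = a"
      by (simp add: y_def algebra_simps flip: scaleR_add_left)
    then have "f a \<le> (1 - t) * f x + t * f y"
      using convex_onD[OF \<open>convex_on S f\<close>, of t x y] \<open>s > 0\<close> that ball \<open>y \<in> cball a r\<close>
      by (auto simp: t_def)
    also have "\<dots> \<le> (1 - t) * f x + t * B"
      using B[OF \<open>y \<in> cball a r\<close>] \<open>s > 0\<close> by (simp add: t_def divide_right_mono)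
    also have "\<dots> = (s * f x + B) / (1 + s)"
      unfolding t(1) by (simp add: t_def add_divide_distrib)
    finally show ?thesis
      using \<open>s > 0\<close> by (simp add: field_simps)
  qed
  then show ?thesis by (rule bdd_belowI2)
qed simp

lemma set_integrable_const:
  fixes c :: real
  assumes "P \<in> fmeasurable M"
  shows "set_integrable M P (\<lambda>_. c)"
  using assms unfolding set_integrable_def fmeasurable_def by simp

lemma
  fixes c :: real
  assumes "Z \<subseteq> P" "Z \<in> fmeasurable M"
  shows set_integrable_indicator_mult: "set_integrable M P (\<lambda>x. indicator Z x * c)"
    and set_integral_indicator_mult: "(LINT x:P|M. indicator Z x * c) = measure M Z * c"
proof -
  have "(\<lambda>x. indicator P x *\<^sub>R (indicator Z x * c)) = (\<lambda>x. indicator Z x * c)"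
    using \<open>Z \<subseteq> P\<close> by (auto simp: indicator_def fun_eq_iff)
  then show "set_integrable M P (\<lambda>x. indicator Z x * c)"
    and "(LINT x:P|M. indicator Z x * c) = measure M Z * c"
    using assms unfolding set_integrable_def set_lebesgue_integral_def fmeasurable_def by simp_all
qed

lemma set_integral_abs_le_of_lower_bound:
  fixes \<phi> :: "'a \<Rightarrow> real"
  assumes "set_integrable M P \<phi>" "P \<in> fmeasurable M" "(LINT x:P|M. \<phi> x) = 0"
    and "I \<le> 0" "\<And>x. x \<in> P \<Longrightarrow> I \<le> \<phi> x"
  shows "(LINT x:P|M. \<bar>\<phi> x\<bar>) \<le> - 2 * measure M P * I"
proof -
  have const: "set_integrable M P (\<lambda>_. 2 * I)"
    using \<open>P \<in> fmeasurable M\<close> by (rule set_integrable_const)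
  have "(LINT x:P|M. \<bar>\<phi> x\<bar>) \<le> (LINT x:P|M. \<phi> x - 2 * I)"
    using assms const by (intro set_integral_mono set_integrable_abs set_integral_diff) (auto simp: abs_le_iff)
  also have "\<dots> = - 2 * measure M P * I"
    using assms set_integral_diff(2)[OF assms(1) const]
    by (simp add: set_integral_const fmeasurableD fmeasurableD2)
  finally show ?thesis .
qed

lemma set_integral_abs_ge_of_upper_bound:
  fixes \<phi> :: "'a \<Rightarrow> real"
  assumes "set_integrable M P \<phi>" "(LINT x:P|M. \<phi> x) = 0"
    and "Z \<subseteq> P" "Z \<in> fmeasurable M" "\<And>x. x \<in> Z \<Longrightarrow> \<phi> x \<le> - m"
  shows "2 * m * measure M Z \<le> (LINT x:P|M. \<bar>\<phi> x\<bar>)"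
proof -
  have ind: "set_integrable M P (\<lambda>x. indicator Z x * (2 * m))"
    using assms(3,4) by (rule set_integrable_indicator_mult)
  have "2 * m * measure M Z = (LINT x:P|M. \<phi> x + indicator Z x * (2 * m))"
    unfolding set_integral_add(2)[OF assms(1) ind] set_integral_indicator_mult[OF assms(3,4)] assms(2)
    by simp
  also have "\<dots> \<le> (LINT x:P|M. \<bar>\<phi> x\<bar>)"
  proof (intro set_integral_mono set_integrable_abs set_integral_add ind assms(1))
    show "\<phi> x + indicator Z x * (2 * m) \<le> \<bar>\<phi> x\<bar>" for x
      using assms(5)[of x] by (cases "x \<in> Z") auto
  qed
  finally show ?thesis .
qed

definition l1_inf_ratio :: "'a measure \<Rightarrow> 'a set \<Rightarrow> ('a \<Rightarrow> real) \<Rightarrow> real" where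
  "l1_inf_ratio M P \<phi> = (LINT x:P|M. \<bar>\<phi> x\<bar>) / (- measure M P * (INF x\<in>P. \<phi> x))"

lemma l1_inf_ratio_le_2:
  fixes \<phi> :: "'a::euclidean_space \<Rightarrow> real"
  assumes "open P" "bounded P" "convex_on P \<phi>"
    and "set_integrable lebesgue P \<phi>" "(LINT x:P|lebesgue. \<phi> x) = 0"
  shows "l1_inf_ratio lebesgue P \<phi> \<le> 2"
  unfolding l1_inf_ratio_def
proof (cases "- measure lebesgue P * (INF x\<in>P. \<phi> x) > 0")
  case True
  then have "(INF x\<in>P. \<phi> x) \<le> 0"
    using measure_nonneg[of lebesgue P] by (auto simp: mult_less_0_iff)
  moreover have "(INF x\<in>P. \<phi> x) \<le> \<phi> x" if "x \<in> P" for x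
    using convex_on_bdd_below[OF assms(1-3)] that by (rule cINF_lower)
  ultimately have "(LINT x:P|lebesgue. \<bar>\<phi> x\<bar>) \<le> - 2 * measure lebesgue P * (INF x\<in>P. \<phi> x)"
    using assms lmeasurable_open by (intro set_integral_abs_le_of_lower_bound) auto
  with True show "(LINT x:P|lebesgue. \<bar>\<phi> x\<bar>) / (- measure lebesgue P * (INF x\<in>P. \<phi> x)) \<le> 2"
    by (subst pos_divide_le_eq) (simp_all add: algebra_simps)
next
  case False
  have "0 \<le> (LINT x:P|lebesgue. \<bar>\<phi> x\<bar>)"
    unfolding set_lebesgue_integral_def by (simp add: indicator_def)
  with False show "(LINT x:P|lebesgue. \<bar>\<phi> x\<bar>) / (- measure lebesgue P * (INF x\<in>P. \<phi> x)) \<le> 2"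
    by (smt (verit) divide_nonneg_nonpos)
qed

lemma fmeasurableI_measure_pos: "A \<in> sets M \<Longrightarrow> 0 < measure M A \<Longrightarrow> A \<in> fmeasurable M"
  using measure_zero_top by (fastforce intro: fmeasurableI simp: less_top)

lemma
  fixes \<psi> :: "'a \<Rightarrow> real"
  assumes "set_integrable M P \<psi>" "P \<in> sets M" "0 < measure M P"
  shows set_integrable_sub_mean: "set_integrable M P (\<lambda>x. \<psi> x - (LINT y:P|M. \<psi> y) / measure M P)"
    and set_integral_sub_mean: "(LINT x:P|M. \<psi> x - (LINT y:P|M. \<psi> y) / measure M P) = 0"
proof -
  have "P \<in> fmeasurable M"
    using assms(2,3) by (rule fmeasurableI_measure_pos)
  then have const: "set_integrable M P (\<lambda>_. (LINT y:P|M. \<psi> y) / measure M P)"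
    by (rule set_integrable_const)
  show "set_integrable M P (\<lambda>x. \<psi> x - (LINT y:P|M. \<psi> y) / measure M P)"
    using assms(1) const by (rule set_integral_diff)
  show "(LINT x:P|M. \<psi> x - (LINT y:P|M. \<psi> y) / measure M P) = 0"
    unfolding set_integral_diff(2)[OF assms(1) const]
    using \<open>P \<in> fmeasurable M\<close> assms(3) by (simp add: set_integral_const fmeasurableD2)
qed

lemma l1_inf_ratio_sub_mean_ge:
  fixes \<psi> :: "'a \<Rightarrow> real"
  assumes "set_integrable M P \<psi>" "P \<in> sets M" "0 < measure M P" "\<And>x. x \<in> P \<Longrightarrow> 0 \<le> \<psi> x"
    and "Z \<subseteq> P" "Z \<in> sets M" "z \<in> Z" "\<And>x. x \<in> Z \<Longrightarrow> \<psi> x = 0"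
    and "0 < (LINT x:P|M. \<psi> x)"
  shows "2 * measure M Z / measure M P \<le> l1_inf_ratio M P (\<lambda>x. \<psi> x - (LINT y:P|M. \<psi> y) / measure M P)"
proof -
  define m where "m = (LINT y:P|M. \<psi> y) / measure M P"
  have "m > 0"
    using assms(3,9) by (simp add: m_def)
  have "z \<in> P"
    using assms(5,7) by blast
  have "(INF x\<in>P. \<psi> x - m) = \<psi> z - m"
    by (rule cInf_eq_minimum) (use \<open>z \<in> P\<close> assms(4,7,8) in \<open>auto simp: image_iff intro: bexI[of _ z]\<close>)
  then have inf: "(INF x\<in>P. \<psi> x - m) = - m"
    using assms(7,8) by simp
  have "Z \<in> fmeasurable M"
    using fmeasurableI_measure_pos[OF assms(2,3)] assms(5,6) by (rule fmeasurableI2)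
  then have "2 * m * measure M Z \<le> (LINT x:P|M. \<bar>\<psi> x - m\<bar>)"
    using set_integrable_sub_mean[OF assms(1-3)] set_integral_sub_mean[OF assms(1-3)] assms(5,8)
    by (intro set_integral_abs_ge_of_upper_bound) (simp_all add: m_def)
  then show ?thesis
    using \<open>m > 0\<close> assms(3) by (simp add: l1_inf_ratio_def inf field_simps flip: m_def)
qed

definition slab :: "'n::finite \<Rightarrow> real \<Rightarrow> real \<Rightarrow> (real^'n) set" where
  "slab k a b = box (\<chi> i. if i = k then a else 0) (\<chi> i. if i = k then b else 1)"

lemma mem_slab: "x \<in> slab k a b \<longleftrightarrow> a < x$k \<and> x$k < b \<and> (\<forall>i. i \<noteq> k \<longrightarrow> 0 < x$i \<and> x$i < 1)"
  unfolding slab_def mem_box_cart by (auto split: if_splits)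

lemma lmeasurable_slab [iff]: "slab k a b \<in> lmeasurable"
  by (simp add: slab_def)

lemma slab_0_1: "slab k 0 1 = box 0 1"
  unfolding slab_def by (rule arg_cong2[where f = box]) (simp_all add: vec_eq_iff)

lemma slab_subset_unit_box:
  assumes "0 \<le> a" "b \<le> 1"
  shows "slab k a b \<subseteq> box 0 1"
proof
  fix x assume "x \<in> slab k a b"
  then have "0 < x$i \<and> x$i < 1" for i
    using assms by (cases "i = k") (auto simp: mem_slab)
  then show "x \<in> box 0 1"
    by (simp add: mem_box_cart)
qed

lemma measure_slab:
  assumes "a \<le> b"
  shows "measure lebesgue (slab k a b) = b - a"
proof -
  let ?l = "\<chi> i. if i = k then a else 0" and ?u = "\<chi> i. if i = k then b else (1::real)"
  have "?l \<in> cbox ?l ?u"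
    using assms by (simp add: mem_box_cart)
  then have "cbox ?l ?u \<noteq> {}"
    by blast
  have "measure lebesgue (slab k a b) = measure lborel (box ?l ?u)"
    by (simp add: slab_def)
  also have "\<dots> = measure lborel (cbox ?l ?u)"
    by (simp add: measure_lborel_box_eq measure_lborel_cbox_eq)
  also have "\<dots> = (\<Prod>i\<in>UNIV. ?u$i - ?l$i)"
    using \<open>cbox ?l ?u \<noteq> {}\<close> by (rule content_cbox_cart)
  also have "\<dots> = b - a"
    by (simp add: if_distrib prod.If_cases)
  finally show ?thesis .
qed

lemma convex_on_hinge_component:
  fixes k :: "'n::finite"
  assumes "convex S"
  shows "convex_on S (\<lambda>x::real^'n. max 0 (x$k - c))"
proof (rule convex_onI[OF _ assms])
  fix t :: real and x y :: "real^'n"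
  assume "0 < t" "t < 1"
  have "(1 - t) *\<^sub>R x $ k + t *\<^sub>R y $ k - c = (1 - t) * (x$k - c) + t * (y$k - c)"
    by (simp add: algebra_simps)
  also have "\<dots> \<le> (1 - t) * max 0 (x$k - c) + t * max 0 (y$k - c)"
    using \<open>0 < t\<close> \<open>t < 1\<close> by (intro add_mono mult_left_mono) auto
  finally show "max 0 (((1 - t) *\<^sub>R x + t *\<^sub>R y) $ k - c) \<le> (1 - t) * max 0 (x$k - c) + t * max 0 (y$k - c)"
    using \<open>0 < t\<close> \<open>t < 1\<close> by simp
qed

lemma unit_box_l1_inf_ratio_ge:
  fixes k :: "'n::finite"
  assumes "0 < c" "c < 1"
  obtains \<phi> :: "real^'n \<Rightarrow> real"
  where "convex_on (box 0 1) \<phi>" "set_integrable lebesgue (box 0 1) \<phi>"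
    "(LINT x:box 0 1|lebesgue. \<phi> x) = 0" "\<exists>x\<in>box 0 1. \<phi> x \<noteq> 0"
    "2 * c \<le> l1_inf_ratio lebesgue (box 0 1) \<phi>"
proof -
  define \<psi> where "\<psi> = (\<lambda>x::real^'n. max 0 (x$k - c))"
  define \<phi> where "\<phi> = (\<lambda>x. \<psi> x - (LINT y:box 0 1|lebesgue. \<psi> y) / measure lebesgue (box 0 (1::real^'n)))"
  have unit: "measure lebesgue (box 0 (1::real^'n)) = 1"
    using measure_slab[of 0 1 k] by (simp add: slab_0_1)
  have int: "set_integrable lebesgue (box 0 1) \<psi>"
  proof (rule set_integrable_subset)
    show "set_integrable lebesgue (cbox 0 1) \<psi>"
      unfolding \<psi>_def by (intro absolutely_integrable_continuous continuous_intros)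
  qed (auto simp: box_subset_cbox)
  define W where "W = slab k ((1 + c) / 2) 1"
  have W: "W \<subseteq> box 0 1" "W \<in> lmeasurable"
    using \<open>0 < c\<close> by (simp_all add: W_def slab_subset_unit_box)
  have "((1 - c) / 2) * ((1 - c) / 2) = (LINT x:box 0 1|lebesgue. indicator W x * ((1 - c) / 2))"
    unfolding set_integral_indicator_mult[OF W] using \<open>c < 1\<close> by (simp add: W_def measure_slab field_simps)
  also have "\<dots> \<le> (LINT x:box 0 1|lebesgue. \<psi> x)"
  proof (rule set_integral_mono[OF set_integrable_indicator_mult[OF W] int])
    show "indicator W x * ((1 - c) / 2) \<le> \<psi> x" for x
      by (auto simp: indicator_def W_def mem_slab \<psi>_def)
  qed
  finally have "((1 - c) / 2) * ((1 - c) / 2) \<le> (LINT x:box 0 1|lebesgue. \<psi> x)" .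
  moreover have "0 < ((1 - c) / 2) * ((1 - c) / 2)"
    using \<open>c < 1\<close> by simp
  ultimately have pos: "0 < (LINT x:box 0 1|lebesgue. \<psi> x)"
    by linarith
  let ?Z = "slab k 0 c" and ?z = "\<chi> i. c / 2 :: real^'n"
  have Z: "?Z \<subseteq> box 0 1" "?Z \<in> sets lebesgue" "?z \<in> ?Z" "\<And>x. x \<in> ?Z \<Longrightarrow> \<psi> x = 0"
    using assms by (simp_all add: slab_subset_unit_box fmeasurableD mem_slab \<psi>_def)
  have P: "box 0 1 \<in> sets lebesgue" "0 < measure lebesgue (box 0 (1::real^'n))"
    "\<And>x. x \<in> box 0 1 \<Longrightarrow> 0 \<le> \<psi> x"
    by (simp_all add: unit \<psi>_def)
  show ?thesis
  proof
    show "convex_on (box 0 1) \<phi>"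
      unfolding \<phi>_def \<psi>_def
      by (intro convex_on_diff convex_on_hinge_component concave_on_const[THEN iffD2] convex_box)
    show "set_integrable lebesgue (box 0 1) \<phi>"
      unfolding \<phi>_def using int P(1,2) by (rule set_integrable_sub_mean)
    show "(LINT x:box 0 1|lebesgue. \<phi> x) = 0"
      unfolding \<phi>_def using int P(1,2) by (rule set_integral_sub_mean)
    show "\<exists>x\<in>box 0 1. \<phi> x \<noteq> 0"
      using Z(1,3) Z(4)[OF Z(3)] pos unfolding \<phi>_def unit by force
    show "2 * c \<le> l1_inf_ratio lebesgue (box 0 1) \<phi>"
      using l1_inf_ratio_sub_mean_ge[OF int P Z pos] \<open>0 < c\<close>
      unfolding \<phi>_def by (simp add: unit measure_slab)
  qed
qed

theorem proposition4p3:
  shows "\<exists>P :: (real^'n) set. open P \<and> bounded P \<and> convex P \<and>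
    (SUP \<phi> \<in> {\<phi> :: real^'n \<Rightarrow> real. convex_on P \<phi> \<and> set_integrable lebesgue P \<phi> \<and>
                (LINT x:P|lebesgue. \<phi> x) = 0 \<and> (\<exists>x\<in>P. \<phi> x \<noteq> 0)}.
       ereal ((LINT x:P|lebesgue. \<bar>\<phi> x\<bar>) / (- measure lebesgue P * (INF x\<in>P. \<phi> x)))) = 2"
  unfolding l1_inf_ratio_def[symmetric]
proof (intro exI[of _ "box 0 1"] conjI open_box bounded_box convex_box SUP_eqI, goal_cases)
  case (1 \<phi>)
  then show ?case
    by (auto intro: l1_inf_ratio_le_2)
next
  case (2 y)
  show ?case
  proof (rule dense_le_bounded[of 0])
    fix w :: ereal
    assume "0 < w" "w < 2"
    then obtain r where r: "w = ereal r" "0 < r / 2" "r / 2 < 1"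
      by (cases w) auto
    obtain \<phi> :: "real^'n \<Rightarrow> real" where \<phi>: "convex_on (box 0 1) \<phi>" "set_integrable lebesgue (box 0 1) \<phi>"
      "(LINT x:box 0 1|lebesgue. \<phi> x) = 0" "\<exists>x\<in>box 0 1. \<phi> x \<noteq> 0"
      "2 * (r / 2) \<le> l1_inf_ratio lebesgue (box 0 1) \<phi>"
      using r(2,3) by (rule unit_box_l1_inf_ratio_ge)
    have "w \<le> ereal (l1_inf_ratio lebesgue (box 0 1) \<phi>)"
      using r(1) \<phi>(5) by simp
    also have "\<dots> \<le> y"
      using 2 \<phi> by blast
    finally show "w \<le> y" .
  qed simp
qed

end
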